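(* Let $t,p\in\mathbb{N}$ with $p\ge 3t^2+t+1$. Then $X_p\xrightarrow{\cap} tS_{t,t,t}$ and $Y_p\xrightarrow{\cap} tS_{t,t,t}$.
   Context: All graphs are finite and simple. For graphs $G_1=(V_1,E_1)$, $G_2=(V_2,E_2)$, $G_1\cap G_2=(V_1\cap V_2, E_1\cap E_2)$. For a graph $G=(V,E)$ and an injective map $\alpha$ on $V$, $G^{\alpha}$ has vertex set $\alpha(V)$ and edge set $\{\{\alpha(v),\alpha(w)\}: \{v,w\}\in E\}$. We write $G\xrightarrow{\cap} H$ if $H$ is (isomorphic to) $G^{\alpha_1}\cap\cdots\cap G^{\alpha_k}$ for some $k\ge1$ and injective maps $\alpha_1,\dots,\alpha_k$ on $V(G)$. For integers $a,b,c\ge1$, $S_{a,b,c}$ is the tree consisting of a vertex of degree $3$ together with three pendant paths having $a$, $b$, $c$ edges respectively; $tS_{t,t,t}$ is the disjoint union of $t$ copies of $S_{t,t,t}$. $X_p$ is the graph obtained from the complete bipartite graph $K_{p,p}$ by adding a new vertex adjacent to exactly two vertices, both in the same part of $K_{p,p}$; $Y_p$ is obtained from $K_{p,p}$ by adding a new vertex adjacent to exactly two vertices, one in each part. *)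

theory Defs
  imports Main
begin

type_synonym 'a graph = "'a set \<times> 'a set set"

definition verts :: "'a graph \<Rightarrow> 'a set" where "verts G = fst G"
definition edges :: "'a graph \<Rightarrow> 'a set set" where "edges G = snd G"

definition simple_graph :: "'a graph \<Rightarrow> bool" where
  "simple_graph G \<longleftrightarrow> finite (verts G) \<and>
     (\<forall>e\<in>edges G. \<exists>u v. u \<noteq> v \<and> u \<in> verts G \<and> v \<in> verts G \<and> e = {u, v})"

definition gimage :: "('a \<Rightarrow> 'b) \<Rightarrow> 'a graph \<Rightarrow> 'b graph" where
  "gimage \<alpha> G = (\<alpha> ` verts G, (\<lambda>e. \<alpha> ` e) ` edges G)"

definition ginter_images :: "nat \<Rightarrow> (nat \<Rightarrow> 'a \<Rightarrow> 'a) \<Rightarrow> 'a graph \<Rightarrow> 'a graph" where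
  "ginter_images k \<alpha> G =
     ((\<Inter>i<k. verts (gimage (\<alpha> i) G)), (\<Inter>i<k. edges (gimage (\<alpha> i) G)))"

definition graph_iso :: "'a graph \<Rightarrow> 'b graph \<Rightarrow> bool" where
  "graph_iso G H \<longleftrightarrow> (\<exists>f. bij_betw f (verts G) (verts H) \<and>
     (\<forall>u\<in>verts G. \<forall>v\<in>verts G. {u, v} \<in> edges G \<longleftrightarrow> {f u, f v} \<in> edges H))"

text \<open>G \<rightarrow>\<inter> H: H is isomorphic to an intersection of k \<ge> 1 injective images of G
  (maps on V(G) into the vertex universe of G).\<close>
definition inter_arrow :: "'a graph \<Rightarrow> 'b graph \<Rightarrow> bool" where
  "inter_arrow G H \<longleftrightarrow> (\<exists>k \<ge> 1. \<exists>\<alpha> :: nat \<Rightarrow> 'a \<Rightarrow> 'a.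
      (\<forall>i<k. inj_on (\<alpha> i) (verts G)) \<and> graph_iso H (ginter_images k \<alpha> G))"

definition spider :: "nat \<Rightarrow> nat \<Rightarrow> nat \<Rightarrow> (nat \<times> nat) graph" where
  "spider a b c = (let len = (\<lambda>j::nat. if j = 1 then a else if j = 2 then b else c) in
     (insert (0,0) {(j, i) | j i. j \<in> {1,2,3} \<and> 1 \<le> i \<and> i \<le> len j},
      {{(0,0), (j,1)} | j. j \<in> {1,2,3}} \<union>
      {{(j,i), (j, Suc i)} | j i. j \<in> {1,2,3} \<and> 1 \<le> i \<and> i < len j}))"

definition copies :: "nat \<Rightarrow> 'a graph \<Rightarrow> (nat \<times> 'a) graph" where
  "copies t G = ({(c, v) | c v. c < t \<and> v \<in> verts G},
                 {(\<lambda>v. (c, v)) ` e | c e. c < t \<and> e \<in> edges G})"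

definition Kpp :: "nat \<Rightarrow> nat graph" where
  "Kpp p = ({0..<2*p}, {{u, v} | u v. u < p \<and> p \<le> v \<and> v < 2*p})"

text \<open>X_p: new vertex 2p adjacent to 0 and 1 (same part); Y_p: adjacent to 0 and p.\<close>
definition Xg :: "nat \<Rightarrow> nat graph" where
  "Xg p = (insert (2*p) (verts (Kpp p)), edges (Kpp p) \<union> {{2*p, 0}, {2*p, 1}})"

definition Yg :: "nat \<Rightarrow> nat graph" where
  "Yg p = (insert (2*p) (verts (Kpp p)), edges (Kpp p) \<union> {{2*p, 0}, {2*p, p}})"

end

theory Submission
  imports Defs "HOL-Library.Countable"
begin

(* If injective homomorphisms beta_1, ..., beta_k (k >= 2) of H into G are such that a pair of
   vertices of H is an edge exactly when every beta_i maps it to an edge, then G ->cap H: let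
   alpha_i send beta_i(w) to a code of w shared by all i, and every other vertex of G to a code
   private to i.  So it suffices that every non-edge of H = t S_{t,t,t} is mapped to a non-edge
   by some injective homomorphism into G, where G is K_{p,p} plus a vertex 2p joined to 0 and to
   q (q = 1 for X_p, q = p for Y_p).  H is bipartite, with levels of even and odd distance from
   the centers as color classes, and has at most p vertices.  A non-edge between vertices of
   equal color is separated by embedding the color classes into the two sides of K_{p,p}.
   Otherwise one end w lies on a leg and has at most two neighbors; mapping w to 2p and its
   neighbors to 0 and q, the rest of H still embeds bipartitely into K_{p,p} minus 0 and q,
   which separates w from all its non-neighbors. *)

lemma verts_ginter_images [simp]: "verts (ginter_images k \<alpha> G) = (\<Inter>i<k. \<alpha> i ` verts G)"
  by (simp add: ginter_images_def gimage_def verts_def)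

lemma edges_ginter_images [simp]:
  "edges (ginter_images k \<alpha> G) = (\<Inter>i<k. image (\<alpha> i) ` edges G)"
  by (simp add: ginter_images_def gimage_def edges_def verts_def)

definition inj_hom :: "'a graph \<Rightarrow> 'b graph \<Rightarrow> ('a \<Rightarrow> 'b) \<Rightarrow> bool" where
  "inj_hom H G \<beta> \<longleftrightarrow> inj_on \<beta> (verts H) \<and> \<beta> ` verts H \<subseteq> verts G \<and>
     (\<forall>u\<in>verts H. \<forall>v\<in>verts H. {u, v} \<in> edges H \<longrightarrow> {\<beta> u, \<beta> v} \<in> edges G)"

definition shared_code :: "'b::countable set \<Rightarrow> ('b \<Rightarrow> 'a::countable) \<Rightarrow> nat \<Rightarrow> 'a \<Rightarrow> nat" where
  "shared_code W \<beta> i v =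
     (if v \<in> \<beta> ` W then 2 * to_nat (inv_into W \<beta> v) else 2 * to_nat (i, v) + 1)"

lemma shared_code_apply: "inj_on \<beta> W \<Longrightarrow> w \<in> W \<Longrightarrow> shared_code W \<beta> i (\<beta> w) = 2 * to_nat w"
  by (simp add: shared_code_def)

lemma even_shared_code_iff: "even (shared_code W \<beta> i v) \<longleftrightarrow> v \<in> \<beta> ` W"
  by (simp add: shared_code_def)

lemma inj_shared_code:
  assumes "inj_on \<beta> W"
  shows "inj (shared_code W \<beta> i)"
proof (rule injI)
  fix a b assume eq: "shared_code W \<beta> i a = shared_code W \<beta> i b"
  then consider "a \<in> \<beta> ` W" "b \<in> \<beta> ` W" | "a \<notin> \<beta> ` W" "b \<notin> \<beta> ` W"
    using even_shared_code_iff by metis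
  then show "a = b"
  proof cases
    case 1
    then show ?thesis
      using eq inv_into_injective[of W \<beta> a b] by (simp add: shared_code_def)
  next
    case 2
    then show ?thesis
      using eq by (simp add: shared_code_def)
  qed
qed

lemma shared_code_eq_shared_code_imp:
  fixes \<beta> \<beta>' :: "'b::countable \<Rightarrow> 'a::countable"
  assumes "shared_code W \<beta> i a = shared_code W \<beta>' j b" "i \<noteq> j"
  shows "shared_code W \<beta> i a \<in> (\<lambda>w. 2 * to_nat w) ` W"
proof (rule ccontr)
  assume "shared_code W \<beta> i a \<notin> (\<lambda>w. 2 * to_nat w) ` W"
  then have "a \<notin> \<beta> ` W"
    by (auto simp: shared_code_def inv_into_into)
  then have "b \<notin> \<beta>' ` W"
    using assms(1) even_shared_code_iff by metis
  then have "to_nat (i, a) = to_nat (j, b)"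
    using assms(1) \<open>a \<notin> \<beta> ` W\<close> by (simp add: shared_code_def)
  with \<open>i \<noteq> j\<close> show False
    by simp
qed

lemma INT_image_shared_code:
  fixes \<beta> :: "nat \<Rightarrow> 'b::countable \<Rightarrow> 'a::countable"
  assumes "2 \<le> k" and \<beta>: "\<forall>i<k. inj_on (\<beta> i) W \<and> \<beta> i ` W \<subseteq> V"
  shows "(\<Inter>i<k. shared_code W (\<beta> i) i ` V) = (\<lambda>w. 2 * to_nat w) ` W"
proof
  show "(\<lambda>w. 2 * to_nat w) ` W \<subseteq> (\<Inter>i<k. shared_code W (\<beta> i) i ` V)"
  proof (intro subsetI INT_I)
    fix z i assume "z \<in> (\<lambda>w. 2 * to_nat w) ` W" "i \<in> {..<k}"
    then obtain w where "w \<in> W" "z = shared_code W (\<beta> i) i (\<beta> i w)" "\<beta> i w \<in> V"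
      using \<beta> shared_code_apply by fastforce
    then show "z \<in> shared_code W (\<beta> i) i ` V"
      by blast
  qed
next
  show "(\<Inter>i<k. shared_code W (\<beta> i) i ` V) \<subseteq> (\<lambda>w. 2 * to_nat w) ` W"
  proof
    fix z assume "z \<in> (\<Inter>i<k. shared_code W (\<beta> i) i ` V)"
    then have "z \<in> shared_code W (\<beta> 0) 0 ` V" "z \<in> shared_code W (\<beta> 1) 1 ` V"
      using \<open>2 \<le> k\<close> by auto
    then obtain a b where "z = shared_code W (\<beta> 0) 0 a" "z = shared_code W (\<beta> 1) 1 b"
      by blast
    then show "z \<in> (\<lambda>w. 2 * to_nat w) ` W"
      using shared_code_eq_shared_code_imp[of W "\<beta> 0" 0 a "\<beta> 1" 1 b] by simp
  qed
qed

lemma image_mem_image_image_iff: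
  assumes "inj_on f C" "\<E> \<subseteq> Pow C" "A \<subseteq> C"
  shows "f ` A \<in> image f ` \<E> \<longleftrightarrow> A \<in> \<E>"
  using inj_on_image_mem_iff[OF inj_on_image_Pow[OF assms(1)]] assms(2,3) by blast

lemma inter_arrow_if_inj_homs_separate:
  fixes G :: "nat graph" and H :: "'b::countable graph" and \<beta> :: "nat \<Rightarrow> 'b \<Rightarrow> nat"
  assumes edges_G: "\<forall>e\<in>edges G. e \<subseteq> verts G" and "2 \<le> k"
    and hom: "\<forall>i<k. inj_hom H G (\<beta> i)"
    and sep: "\<forall>u\<in>verts H. \<forall>v\<in>verts H. (\<forall>i<k. {\<beta> i u, \<beta> i v} \<in> edges G) \<longrightarrow> {u, v} \<in> edges H"
  shows "inter_arrow G H"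
proof -
  let ?W = "verts H"
  define f where "f w = 2 * to_nat w" for w :: 'b
  define \<alpha> where "\<alpha> i = shared_code ?W (\<beta> i) i" for i
  have inj_\<beta>: "inj_on (\<beta> i) ?W" if "i < k" for i
    using hom that by (simp add: inj_hom_def)
  have \<alpha>_\<beta>: "\<alpha> i (\<beta> i w) = f w" if "i < k" "w \<in> ?W" for i w
    using shared_code_apply[OF inj_\<beta>] that by (simp add: \<alpha>_def f_def)
  have inj_\<alpha>: "inj_on (\<alpha> i) (verts G)" if "i < k" for i
    using inj_on_subset[OF inj_shared_code[OF inj_\<beta>[OF that]]] by (simp add: \<alpha>_def)
  have verts_inter: "(\<Inter>i<k. \<alpha> i ` verts G) = f ` ?W"
    using INT_image_shared_code[OF \<open>2 \<le> k\<close>, of \<beta> ?W "verts G"] hom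
    by (simp add: \<alpha>_def f_def[abs_def] inj_hom_def)
  have edge_image_iff: "{f u, f v} \<in> image (\<alpha> i) ` edges G \<longleftrightarrow> {\<beta> i u, \<beta> i v} \<in> edges G"
    if "i < k" "u \<in> ?W" "v \<in> ?W" for i u v
  proof -
    have "{f u, f v} = \<alpha> i ` {\<beta> i u, \<beta> i v}"
      using \<alpha>_\<beta> that by simp
    moreover have "{\<beta> i u, \<beta> i v} \<subseteq> verts G"
      using hom that by (auto simp: inj_hom_def)
    moreover have "edges G \<subseteq> Pow (verts G)"
      using edges_G by auto
    ultimately show ?thesis
      using image_mem_image_image_iff[OF inj_\<alpha>[OF \<open>i < k\<close>]] by presburger
  qed
  have "graph_iso H (ginter_images k \<alpha> G)"
    unfolding graph_iso_def
  proof (intro exI conjI ballI)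
    show "bij_betw f ?W (verts (ginter_images k \<alpha> G))"
      using verts_inter inj_on_subset[of f UNIV] by (simp add: bij_betw_def f_def inj_def)
    show "{u, v} \<in> edges H \<longleftrightarrow> {f u, f v} \<in> edges (ginter_images k \<alpha> G)"
      if "u \<in> ?W" "v \<in> ?W" for u v
      using that hom sep edge_image_iff by (auto simp: inj_hom_def)
  qed
  then show ?thesis
    unfolding inter_arrow_def using \<open>2 \<le> k\<close> inj_\<alpha> by (intro exI[of _ k] exI[of _ \<alpha>]) auto
qed

lemma inter_arrow_if_nonedges_separated:
  fixes G :: "nat graph" and H :: "'b::countable graph"
  assumes edges_G: "\<forall>e\<in>edges G. e \<subseteq> verts G" and "finite (verts H)"
    and "\<exists>\<beta>. inj_hom H G \<beta>"
    and sep: "\<forall>u\<in>verts H. \<forall>v\<in>verts H. {u, v} \<notin> edges H \<longrightarrow>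
                (\<exists>\<beta>. inj_hom H G \<beta> \<and> {\<beta> u, \<beta> v} \<notin> edges G)"
  shows "inter_arrow G H"
proof -
  let ?W = "verts H"
  define P where "P = {(u, v) \<in> ?W \<times> ?W. {u, v} \<notin> edges H}"
  obtain \<beta>\<^sub>0 where \<beta>\<^sub>0: "inj_hom H G \<beta>\<^sub>0"
    using assms(3) by blast
  have "\<forall>x\<in>P. \<exists>\<beta>. inj_hom H G \<beta> \<and> {\<beta> (fst x), \<beta> (snd x)} \<notin> edges G"
    using sep by (auto simp: P_def)
  then obtain B where B: "\<forall>x\<in>P. inj_hom H G (B x) \<and> {B x (fst x), B x (snd x)} \<notin> edges G"
    by (auto dest!: bchoice)
  have "P \<subseteq> ?W \<times> ?W"
    by (auto simp: P_def)
  then have "finite P"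
    using \<open>finite ?W\<close> finite_subset by blast
  then obtain xs where xs: "set xs = P"
    using finite_list by blast
  define \<beta> where "\<beta> i = (if i < length xs then B (xs ! i) else \<beta>\<^sub>0)" for i
  show ?thesis
  proof (rule inter_arrow_if_inj_homs_separate[OF edges_G, where k = "length xs + 2" and \<beta> = \<beta>])
    show "\<forall>i<length xs + 2. inj_hom H G (\<beta> i)"
      using B \<beta>\<^sub>0 xs nth_mem by (auto simp: \<beta>_def)
    show "\<forall>u\<in>?W. \<forall>v\<in>?W. (\<forall>i<length xs + 2. {\<beta> i u, \<beta> i v} \<in> edges G) \<longrightarrow> {u, v} \<in> edges H"
    proof (intro ballI impI; rule ccontr)
      fix u v assume "u \<in> ?W" "v \<in> ?W" "{u, v} \<notin> edges H"
        and all: "\<forall>i<length xs + 2. {\<beta> i u, \<beta> i v} \<in> edges G"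
      then have "(u, v) \<in> set xs"
        using xs by (simp add: P_def)
      then obtain i where i: "i < length xs" "xs ! i = (u, v)"
        by (auto simp: in_set_conv_nth)
      then have "{\<beta> i u, \<beta> i v} \<notin> edges G"
        using B xs nth_mem by (force simp: \<beta>_def)
      then show False
        using all i by auto
    qed
  qed simp
qed

definition proper_2coloring_on :: "'a graph \<Rightarrow> 'a set \<Rightarrow> ('a \<Rightarrow> bool) \<Rightarrow> bool" where
  "proper_2coloring_on H S \<sigma> \<longleftrightarrow> (\<forall>u\<in>S. \<forall>v\<in>S. {u, v} \<in> edges H \<longrightarrow> \<sigma> u \<noteq> \<sigma> v)"

lemma proper_2coloring_on_flip:
  assumes "proper_2coloring_on H S \<sigma>"
    and "\<forall>u\<in>S. \<forall>v\<in>S. {u, v} \<in> edges H \<longrightarrow> (u \<in> B \<longleftrightarrow> v \<in> B)"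
  shows "proper_2coloring_on H S (\<lambda>v. \<sigma> v \<noteq> (v \<in> B))"
  using assms by (auto simp: proper_2coloring_on_def)

lemma ex_inj_on_into_color_classes:
  assumes "finite S" "finite A" "finite B" "card S \<le> card A" "card S \<le> card B" "A \<inter> B = {}"
  shows "\<exists>\<beta>. inj_on \<beta> S \<and> (\<forall>v\<in>S. \<not> \<sigma> v \<longrightarrow> \<beta> v \<in> A) \<and> (\<forall>v\<in>S. \<sigma> v \<longrightarrow> \<beta> v \<in> B)"
proof -
  obtain f\<^sub>A where f\<^sub>A: "inj_on f\<^sub>A S" "f\<^sub>A ` S \<subseteq> A"
    using card_le_inj[OF assms(1,2,4)] by blast
  obtain f\<^sub>B where f\<^sub>B: "inj_on f\<^sub>B S" "f\<^sub>B ` S \<subseteq> B"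
    using card_le_inj[OF assms(1,3,5)] by blast
  define \<beta> where "\<beta> v = (if \<sigma> v then f\<^sub>B v else f\<^sub>A v)" for v
  have classes: "(\<forall>v\<in>S. \<not> \<sigma> v \<longrightarrow> \<beta> v \<in> A) \<and> (\<forall>v\<in>S. \<sigma> v \<longrightarrow> \<beta> v \<in> B)"
    using f\<^sub>A f\<^sub>B by (auto simp: \<beta>_def)
  have "inj_on \<beta> S"
  proof (rule inj_onI)
    fix u v assume uv: "u \<in> S" "v \<in> S" "\<beta> u = \<beta> v"
    then have "\<beta> u \<in> (if \<sigma> u then B else A)" "\<beta> v \<in> (if \<sigma> v then B else A)"
      using classes by auto
    then have "\<sigma> u = \<sigma> v"
      using uv(3) \<open>A \<inter> B = {}\<close> by (auto split: if_splits)
    then show "u = v"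
      using uv f\<^sub>A(1) f\<^sub>B(1) by (cases "\<sigma> u") (auto simp: \<beta>_def dest: inj_onD)
  qed
  with classes show ?thesis
    by blast
qed

definition Kpp_plus :: "nat \<Rightarrow> nat \<Rightarrow> nat graph" where
  "Kpp_plus p q = (insert (2*p) (verts (Kpp p)), edges (Kpp p) \<union> {{2*p, 0}, {2*p, q}})"

lemma Xg_eq_Kpp_plus: "Xg p = Kpp_plus p 1"
  by (simp add: Xg_def Kpp_plus_def)

lemma Yg_eq_Kpp_plus: "Yg p = Kpp_plus p p"
  by (simp add: Yg_def Kpp_plus_def)

lemma verts_Kpp_plus: "verts (Kpp_plus p q) = {..2*p}"
  by (auto simp: Kpp_plus_def Kpp_def verts_def)

lemma doubleton_in_edges_Kpp_plus_iff:
  "{a, b} \<in> edges (Kpp_plus p q) \<longleftrightarrow>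
     a < p \<and> p \<le> b \<and> b < 2*p \<or> b < p \<and> p \<le> a \<and> a < 2*p \<or> {a, b} = {2*p, 0} \<or> {a, b} = {2*p, q}"
  by (auto simp: Kpp_plus_def Kpp_def verts_def edges_def doubleton_eq_iff)

lemma edges_Kpp_plus_subset_verts:
  "q \<le> 2*p \<Longrightarrow> \<forall>e\<in>edges (Kpp_plus p q). e \<subseteq> verts (Kpp_plus p q)"
  by (auto simp: Kpp_plus_def Kpp_def verts_def edges_def)

lemma ex_inj_hom_Kpp_plus_bipartite:
  assumes "finite (verts H)" "card (verts H) \<le> p" and \<sigma>: "proper_2coloring_on H (verts H) \<sigma>"
  shows "\<exists>\<beta>. inj_hom H (Kpp_plus p q) \<beta> \<and>
           (\<forall>u\<in>verts H. \<forall>v\<in>verts H. \<sigma> u = \<sigma> v \<longrightarrow> {\<beta> u, \<beta> v} \<notin> edges (Kpp_plus p q))"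
proof -
  have "card {..<p} = p" "card {p..<2*p} = p" "{..<p} \<inter> {p..<2*p} = {}"
    by auto
  then obtain \<beta> where "inj_on \<beta> (verts H)"
    and halves: "\<forall>v\<in>verts H. \<not> \<sigma> v \<longrightarrow> \<beta> v \<in> {..<p}" "\<forall>v\<in>verts H. \<sigma> v \<longrightarrow> \<beta> v \<in> {p..<2*p}"
    using ex_inj_on_into_color_classes[of "verts H" "{..<p}" "{p..<2*p}" \<sigma>] assms(1,2) by auto
  moreover have "\<beta> ` verts H \<subseteq> verts (Kpp_plus p q)"
    using halves by (fastforce simp: verts_Kpp_plus)
  moreover have "{\<beta> u, \<beta> v} \<in> edges (Kpp_plus p q) \<longleftrightarrow> \<sigma> u \<noteq> \<sigma> v"
    if "u \<in> verts H" "v \<in> verts H" for u v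
    using halves that by (auto simp: doubleton_in_edges_Kpp_plus_iff doubleton_eq_iff)
  ultimately show ?thesis
    using \<sigma> by (auto simp: inj_hom_def proper_2coloring_on_def)
qed

lemma ex_inj_on_apex_coloring:
  assumes fin: "finite W" and card: "card W \<le> p" and q: "q = 1 \<or> q = p"
    and "w \<in> W" "x \<in> W" and distinct: "w \<noteq> x" "w \<noteq> y" "x \<noteq> y"
    and \<sigma>: "\<not> \<sigma> x" "\<sigma> y \<longleftrightarrow> q = p"
  shows "\<exists>\<beta>. inj_on \<beta> W \<and> \<beta> w = 2*p \<and> \<beta> x = 0 \<and> \<beta> y = q \<and>
           (\<forall>v\<in>W - {w}. (\<not> \<sigma> v \<longrightarrow> \<beta> v < p) \<and> (\<sigma> v \<longrightarrow> p \<le> \<beta> v \<and> \<beta> v < 2*p)) \<and>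
           (\<forall>v\<in>W - {w, x, y}. 2 \<le> \<beta> v \<and> \<beta> v \<noteq> p)"
proof -
  let ?S = "W - {w, x, y}"
  have "card {w, x} = 2" "{w, x} \<subseteq> W"
    using \<open>w \<in> W\<close> \<open>x \<in> W\<close> distinct by auto
  then have "2 \<le> p" "card (W - {w, x}) \<le> p - 2"
    using card_mono[OF fin, of "{w, x}"] card card_Diff_subset[of "{w, x}" W] fin by auto
  moreover have "card ?S \<le> card (W - {w, x})"
    using fin by (intro card_mono) auto
  ultimately have "card ?S \<le> p - 2" "card ?S \<le> p - 1"
    by linarith+
  moreover have "card {2..<p} = p - 2" "card {Suc p..<2*p} = p - 1" "{2..<p} \<inter> {Suc p..<2*p} = {}"
    by auto
  ultimately obtain \<beta>' where "inj_on \<beta>' ?S"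
    and \<beta>'_halves: "\<forall>v\<in>?S. \<not> \<sigma> v \<longrightarrow> \<beta>' v \<in> {2..<p}" "\<forall>v\<in>?S. \<sigma> v \<longrightarrow> \<beta>' v \<in> {Suc p..<2*p}"
    using ex_inj_on_into_color_classes[of ?S "{2..<p}" "{Suc p..<2*p}" \<sigma>] fin by auto
  define \<beta> where "\<beta> = \<beta>'(w := 2*p, x := 0, y := q)"
  have \<beta>_apex: "\<beta> w = 2*p" "\<beta> x = 0" "\<beta> y = q" and \<beta>_S: "\<And>v. v \<in> ?S \<Longrightarrow> \<beta> v = \<beta>' v"
    using distinct by (auto simp: \<beta>_def)
  have \<beta>_S_range: "\<beta> v \<in> {2..<p} \<union> {Suc p..<2*p}" if "v \<in> ?S" for v
    using \<beta>'_halves \<beta>_S[OF that] that by (cases "\<sigma> v") auto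
  have "inj_on \<beta> (?S \<union> {w, x, y})"
  proof (subst inj_on_Un, intro conjI)
    show "inj_on \<beta> ?S"
      using \<open>inj_on \<beta>' ?S\<close> \<beta>_S inj_on_cong by blast
    show "inj_on \<beta> {w, x, y}"
      using \<beta>_apex distinct q \<open>2 \<le> p\<close> by auto
    show "\<beta> ` (?S - {w, x, y}) \<inter> \<beta> ` ({w, x, y} - ?S) = {}"
      using \<beta>_S_range \<beta>_apex q by fastforce
  qed
  then have "inj_on \<beta> W"
    by (rule inj_on_subset) auto
  moreover have "(\<not> \<sigma> v \<longrightarrow> \<beta> v < p) \<and> (\<sigma> v \<longrightarrow> p \<le> \<beta> v \<and> \<beta> v < 2*p)" if "v \<in> W - {w}" for v
    using that \<beta>'_halves \<beta>_S \<beta>_apex \<sigma> q \<open>2 \<le> p\<close> by (cases "v = x"; cases "v = y") auto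
  moreover have "2 \<le> \<beta> v \<and> \<beta> v \<noteq> p" if "v \<in> ?S" for v
    using \<beta>_S_range[OF that] by auto
  ultimately show ?thesis
    using \<beta>_apex by blast
qed

lemma ex_inj_hom_Kpp_plus_apex:
  assumes fin: "finite (verts H)" and card: "card (verts H) \<le> p" and q: "q = 1 \<or> q = p"
    and w: "w \<in> verts H" and x: "x \<in> verts H" and distinct: "w \<noteq> x" "w \<noteq> y" "x \<noteq> y"
    and N_w: "\<forall>v\<in>verts H. {w, v} \<in> edges H \<longleftrightarrow> v = x \<or> v = y"
    and \<sigma>: "proper_2coloring_on H (verts H - {w}) \<sigma>" "\<not> \<sigma> x" "\<sigma> y \<longleftrightarrow> q = p"
  shows "\<exists>\<beta>. inj_hom H (Kpp_plus p q) \<beta> \<and>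
           (\<forall>v\<in>verts H. {w, v} \<notin> edges H \<longrightarrow> {\<beta> w, \<beta> v} \<notin> edges (Kpp_plus p q))"
proof -
  let ?W = "verts H" and ?G = "Kpp_plus p q"
  obtain \<beta> where "inj_on \<beta> ?W" and \<beta>_apex: "\<beta> w = 2*p" "\<beta> x = 0" "\<beta> y = q"
    and \<beta>_halves: "\<And>v. v \<in> ?W - {w} \<Longrightarrow> (\<not> \<sigma> v \<longrightarrow> \<beta> v < p) \<and> (\<sigma> v \<longrightarrow> p \<le> \<beta> v \<and> \<beta> v < 2*p)"
    and \<beta>_rest: "\<And>v. v \<in> ?W - {w, x, y} \<Longrightarrow> 2 \<le> \<beta> v \<and> \<beta> v \<noteq> p"
    using ex_inj_on_apex_coloring[OF fin card q w x distinct \<sigma>(2,3)] by blast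
  have "0 < p"
    using card fin w card_gt_0_iff by fastforce
  moreover have "\<beta> ` ?W \<subseteq> verts ?G"
    unfolding verts_Kpp_plus
  proof (rule image_subsetI)
    fix v assume "v \<in> ?W"
    then show "\<beta> v \<in> {..2*p}"
      using \<beta>_halves[of v] \<beta>_apex by (cases "v = w"; cases "\<sigma> v") auto
  qed
  moreover have "{\<beta> u, \<beta> v} \<in> edges ?G" if uv: "u \<in> ?W" "v \<in> ?W" "{u, v} \<in> edges H" for u v
  proof (cases "w \<in> {u, v}")
    case True
    then show ?thesis
      using N_w uv \<beta>_apex by (auto simp: doubleton_in_edges_Kpp_plus_iff insert_commute)
  next
    case False
    then have "\<sigma> u \<noteq> \<sigma> v"
      using \<sigma>(1) uv by (auto simp: proper_2coloring_on_def)
    then show ?thesis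
      using \<beta>_halves[of u] \<beta>_halves[of v] uv False by (auto simp: doubleton_in_edges_Kpp_plus_iff)
  qed
  moreover have "{\<beta> w, \<beta> v} \<notin> edges ?G" if "v \<in> ?W" "{w, v} \<notin> edges H" for v
  proof (cases "v = w")
    case True
    then show ?thesis
      using \<beta>_apex q \<open>0 < p\<close> doubleton_in_edges_Kpp_plus_iff[of "2*p" "2*p" p q]
      by (auto simp: doubleton_eq_iff)
  next
    case False
    then have v: "v \<in> ?W - {w, x, y}"
      using that N_w by auto
    then have "2 \<le> \<beta> v" "\<beta> v \<noteq> p" "\<beta> v < 2*p"
      using \<beta>_rest[OF v] \<beta>_halves[of v] by (cases "\<sigma> v"; simp)+
    then show ?thesis
      using \<beta>_apex q by (auto simp: doubleton_in_edges_Kpp_plus_iff doubleton_eq_iff)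
  qed
  ultimately show ?thesis
    using \<open>inj_on \<beta> ?W\<close> unfolding inj_hom_def by blast
qed

lemma verts_copies: "verts (copies n G) = {..<n} \<times> verts G"
  by (auto simp: copies_def verts_def)

lemma doubleton_in_edges_copiesD:
  assumes "{(c, v), (c', v')} \<in> edges (copies n G)"
  shows "c' = c \<and> {v, v'} \<in> edges G"
proof -
  obtain c\<^sub>0 e where eq: "{(c, v), (c', v')} = Pair c\<^sub>0 ` e" and "e \<in> edges G"
    using assms by (auto simp: copies_def edges_def)
  have "(c, v) \<in> Pair c\<^sub>0 ` e" "(c', v') \<in> Pair c\<^sub>0 ` e"
    unfolding eq[symmetric] by simp_all
  then have "c = c\<^sub>0" "c' = c\<^sub>0"
    by auto
  moreover have "e = snd ` Pair c\<^sub>0 ` e"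
    by (simp add: image_image)
  then have "e = {v, v'}"
    by (simp flip: eq)
  ultimately show ?thesis
    using \<open>e \<in> edges G\<close> by simp
qed

lemma doubleton_in_edges_copiesI:
  "c < n \<Longrightarrow> {v, v'} \<in> edges G \<Longrightarrow> {(c, v), (c, v')} \<in> edges (copies n G)"
  unfolding copies_def edges_def by (auto intro!: exI[of _ c] exI[of _ "{v, v'}"])

lemma verts_spider:
  "verts (spider a b d) = insert (0, 0) ({1} \<times> {1..a} \<union> {2} \<times> {1..b} \<union> {3} \<times> {1..d})"
  by (auto simp: spider_def verts_def)

lemma card_verts_spider: "card (verts (spider a b d)) = a + b + d + 1"
  unfolding verts_spider by (simp add: card_Un_disjoint card_cartesian_product disjoint_iff)

lemma doubleton_in_edges_spiderD:
  assumes "{(j, i), (j', i')} \<in> edges (spider a b d)"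
  shows "(j, i) = (0, 0) \<and> j' \<noteq> 0 \<and> i' = 1 \<or> (j', i') = (0, 0) \<and> j \<noteq> 0 \<and> i = 1 \<or>
         j' = j \<and> j \<noteq> 0 \<and> (i' = Suc i \<or> i = Suc i')"
  using assms by (auto simp: spider_def edges_def Let_def doubleton_eq_iff)

lemma center_edge_in_edges_spider:
  "j \<in> {1, 2, 3} \<Longrightarrow> {(0, 0), (j, 1)} \<in> edges (spider a b d)"
  by (auto simp: spider_def edges_def)

lemma leg_edge_in_edges_spider:
  assumes "(j, Suc i) \<in> verts (spider a b d)" "1 \<le> i"
  shows "{(j, i), (j, Suc i)} \<in> edges (spider a b d)"
proof -
  have "j \<in> {1, 2, 3}" "i < (if j = 1 then a else if j = 2 then b else d)"
    using assms by (auto simp: verts_spider)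
  then have "{(j, i), (j, Suc i)} \<in> {{(j, i), (j, Suc i)} | j i.
      j \<in> {1, 2, 3} \<and> 1 \<le> i \<and> i < (if j = 1 then a else if j = 2 then b else d)}"
    using \<open>1 \<le> i\<close> by blast
  then show ?thesis
    by (simp add: spider_def edges_def)
qed

lemma doubleton_in_edges_spidersD:
  assumes "{(c, j, i), (c', j', i')} \<in> edges (copies n (spider a b d))"
  shows "c' = c \<and> ((j, i) = (0, 0) \<and> j' \<noteq> 0 \<and> i' = 1 \<or> (j', i') = (0, 0) \<and> j \<noteq> 0 \<and> i = 1 \<or>
         j' = j \<and> j \<noteq> 0 \<and> (i' = Suc i \<or> i = Suc i'))"
  using doubleton_in_edges_copiesD[OF assms] doubleton_in_edges_spiderD by blast

lemma proper_2coloring_on_spiders_level: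
  "proper_2coloring_on (copies n (spider a b d)) S (\<lambda>v. odd (snd (snd v) + k))"
  unfolding proper_2coloring_on_def
  by (clarsimp simp: split_paired_all dest!: doubleton_in_edges_spidersD) auto

lemma finite_verts_spiders: "finite (verts (copies n (spider a b d)))"
  by (simp add: verts_copies verts_spider)

lemma doubleton_in_edges_spiders_leg_iff:
  fixes n a b d :: nat
  defines "H \<equiv> copies n (spider a b d)"
  assumes w: "(c, j, i) \<in> verts H" "j \<noteq> 0" and "v \<in> verts H"
  shows "{(c, j, i), v} \<in> edges H \<longleftrightarrow> v = (if i = 1 then (c, 0, 0) else (c, j, i - 1)) \<or> v = (c, j, Suc i)"
proof
  assume "{(c, j, i), v} \<in> edges H"
  then show "v = (if i = 1 then (c, 0, 0) else (c, j, i - 1)) \<or> v = (c, j, Suc i)"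
    using w \<open>v \<in> verts H\<close>
    by (cases v) (auto simp: verts_copies verts_spider H_def dest!: doubleton_in_edges_spidersD)
next
  have "c < n" "j \<in> {1, 2, 3}" "1 \<le> i" "(j, i) \<in> verts (spider a b d)"
    using w by (auto simp: H_def verts_copies verts_spider)
  assume "v = (if i = 1 then (c, 0, 0) else (c, j, i - 1)) \<or> v = (c, j, Suc i)"
  then consider "v = (c, 0, 0)" "i = 1" | "v = (c, j, i - 1)" "i \<noteq> 1" | "v = (c, j, Suc i)"
    by (auto split: if_splits)
  then show "{(c, j, i), v} \<in> edges H"
  proof cases
    case 1
    have "{(c, 0, 0), (c, j, 1)} \<in> edges H"
      unfolding H_def
      by (rule doubleton_in_edges_copiesI[OF \<open>c < n\<close> center_edge_in_edges_spider[OF \<open>j \<in> {1, 2, 3}\<close>]])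
    then show ?thesis
      using 1 by (simp add: insert_commute)
  next
    case 2
    then have "(j, Suc (i - 1)) \<in> verts (spider a b d)" "1 \<le> i - 1"
      using \<open>(j, i) \<in> verts (spider a b d)\<close> \<open>1 \<le> i\<close> by auto
    then have "{(c, j, i - 1), (c, j, Suc (i - 1))} \<in> edges H"
      unfolding H_def by (intro doubleton_in_edges_copiesI[OF \<open>c < n\<close>] leg_edge_in_edges_spider)
    then show ?thesis
      using 2 \<open>1 \<le> i\<close> by (simp add: insert_commute)
  next
    case 3
    then have "(j, Suc i) \<in> verts (spider a b d)"
      using \<open>v \<in> verts H\<close> by (simp add: H_def verts_copies)
    then have "{(c, j, i), (c, j, Suc i)} \<in> edges H"
      unfolding H_def by (intro doubleton_in_edges_copiesI[OF \<open>c < n\<close>] leg_edge_in_edges_spider \<open>1 \<le> i\<close>)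
    then show ?thesis
      using 3 by simp
  qed
qed

lemma spiders_leg_vertex_nonedges_separated:
  fixes n a b d :: nat
  defines "H \<equiv> copies n (spider a b d)"
  assumes card: "card (verts H) \<le> p" and q: "q = 1 \<or> q = p"
    and w: "(c, j, i) \<in> verts H" "j \<noteq> 0"
  shows "\<exists>\<beta>. inj_hom H (Kpp_plus p q) \<beta> \<and>
           (\<forall>v\<in>verts H. {(c, j, i), v} \<notin> edges H \<longrightarrow> {\<beta> (c, j, i), \<beta> v} \<notin> edges (Kpp_plus p q))"
proof -
  define x where "x = (if i = 1 then (c, 0, 0) else (c, j, i - 1))"
  define y where "y = (c, j, Suc i)"
  \<comment> \<open>for \<open>q = p\<close> the neighbors \<open>x\<close> and \<open>y\<close> go to opposite sides of \<open>K\<^sub>p\<^sub>,\<^sub>p\<close>, so the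
    level coloring is flipped on the part of the leg beyond \<open>(c, j, i)\<close>\<close>
  define B where "B = (if q = p then {(c, j, i') | i'. i < i'} else {})"
  define \<sigma> where "\<sigma> v = (odd (snd (snd v) + Suc i) \<noteq> (v \<in> B))" for v :: "nat \<times> nat \<times> nat"
  have "1 \<le> i"
    using w by (auto simp: H_def verts_copies verts_spider)
  have x: "x \<in> verts H"
    using w by (auto simp: x_def H_def verts_copies verts_spider)
  have N_w: "\<forall>v\<in>verts H. {(c, j, i), v} \<in> edges H \<longleftrightarrow> v = x \<or> v = y"
    using doubleton_in_edges_spiders_leg_iff[OF w[unfolded H_def]] by (simp add: H_def x_def y_def)
  have "\<forall>u\<in>verts H - {(c, j, i)}. \<forall>v\<in>verts H - {(c, j, i)}. {u, v} \<in> edges H \<longrightarrow> (u \<in> B \<longleftrightarrow> v \<in> B)"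
    using \<open>1 \<le> i\<close> by (clarsimp simp: split_paired_all B_def H_def dest!: doubleton_in_edges_spidersD) auto
  then have "proper_2coloring_on H (verts H - {(c, j, i)}) \<sigma>"
    unfolding \<sigma>_def H_def by (rule proper_2coloring_on_flip[OF proper_2coloring_on_spiders_level])
  moreover have "\<not> \<sigma> x" "\<sigma> y \<longleftrightarrow> q = p"
    using \<open>1 \<le> i\<close> by (auto simp: \<sigma>_def B_def x_def y_def)
  moreover have "(c, j, i) \<noteq> x" "(c, j, i) \<noteq> y" "x \<noteq> y"
    using \<open>1 \<le> i\<close> by (auto simp: x_def y_def)
  ultimately show ?thesis
    using ex_inj_hom_Kpp_plus_apex[OF _ card q w(1) x] N_w finite_verts_spiders H_def by blast
qed

lemma inter_arrow_Kpp_plus_spiders: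
  assumes q: "q = 1 \<or> q = p" and "n * (a + b + d + 1) < p"
  shows "inter_arrow (Kpp_plus p q) (copies n (spider a b d))"
proof -
  let ?H = "copies n (spider a b d)" and ?G = "Kpp_plus p q"
  have card: "card (verts ?H) \<le> p"
    using assms(2) by (simp add: verts_copies card_cartesian_product card_verts_spider)
  have level: "proper_2coloring_on ?H (verts ?H) (\<lambda>v. odd (snd (snd v)))"
    using proper_2coloring_on_spiders_level[where k = 0] by simp
  show ?thesis
  proof (rule inter_arrow_if_nonedges_separated)
    show "\<forall>e\<in>edges ?G. e \<subseteq> verts ?G"
      using q assms(2) by (intro edges_Kpp_plus_subset_verts) auto
    show "finite (verts ?H)"
      by (rule finite_verts_spiders)
    show "\<exists>\<beta>. inj_hom ?H ?G \<beta>"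
      using ex_inj_hom_Kpp_plus_bipartite[OF finite_verts_spiders card level] by blast
    show "\<forall>u\<in>verts ?H. \<forall>v\<in>verts ?H. {u, v} \<notin> edges ?H \<longrightarrow>
            (\<exists>\<beta>. inj_hom ?H ?G \<beta> \<and> {\<beta> u, \<beta> v} \<notin> edges ?G)"
    proof (intro ballI impI)
      fix u v assume u: "u \<in> verts ?H" and v: "v \<in> verts ?H" and uv: "{u, v} \<notin> edges ?H"
      have leg_case: "\<exists>\<beta>. inj_hom ?H ?G \<beta> \<and> {\<beta> w, \<beta> z} \<notin> edges ?G"
        if "w \<in> verts ?H" "z \<in> verts ?H" "{w, z} \<notin> edges ?H" "fst (snd w) \<noteq> 0" for w z
        using spiders_leg_vertex_nonedges_separated[OF card q, of "fst w" "fst (snd w)" "snd (snd w)"] that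
        by auto
      consider "fst (snd u) \<noteq> 0" | "fst (snd v) \<noteq> 0" | "fst (snd u) = 0" "fst (snd v) = 0"
        by blast
      then show "\<exists>\<beta>. inj_hom ?H ?G \<beta> \<and> {\<beta> u, \<beta> v} \<notin> edges ?G"
      proof cases
        case 1
        then show ?thesis
          using leg_case u v uv by blast
      next
        case 2
        then show ?thesis
          using leg_case[OF v u] uv by (simp add: insert_commute)
      next
        case 3
        then have "snd (snd u) = 0" "snd (snd v) = 0"
          using u v by (auto simp: verts_copies verts_spider)
        moreover obtain \<beta> where "inj_hom ?H ?G \<beta>"
          and "\<forall>u\<in>verts ?H. \<forall>v\<in>verts ?H. odd (snd (snd u)) = odd (snd (snd v)) \<longrightarrow> {\<beta> u, \<beta> v} \<notin> edges ?G"
          using ex_inj_hom_Kpp_plus_bipartite[OF finite_verts_spiders card level, of q] by blast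
        ultimately show ?thesis
          using u v by auto
      qed
    qed
  qed
qed

theorem mainTheorem6:
  fixes t p :: nat
  assumes "t \<ge> 1" and "p \<ge> 3 * t^2 + t + 1"
  shows "inter_arrow (Xg p) (copies t (spider t t t)) \<and>
         inter_arrow (Yg p) (copies t (spider t t t))"
proof -
  have "t * (t + t + t + 1) < p"
    using assms(2) by (simp add: power2_eq_square algebra_simps)
  then show ?thesis
    using inter_arrow_Kpp_plus_spiders by (simp add: Xg_eq_Kpp_plus Yg_eq_Kpp_plus)
qed

end
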